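(* Let $(L,\le,(\sqsubseteq_\alpha)_{\alpha<\kappa})$ be a model of Axioms 1–4 with $\kappa$ a limit ordinal. Let $\alpha<\kappa$ and let $f:L\to L$ be $\alpha$-monotonic. Suppose $x\in L$ satisfies $x\sqsubseteq_\alpha f(x)$. Then there is $y\in L$ with the following properties: (1) $x\sqsubseteq_\alpha y$ and $y=_\alpha f(y)$; (2) for every $z\in L$, if $x\sqsubseteq_\alpha z$ and $f(z)\sqsubseteq_\alpha z$, then $y\sqsubseteq_\alpha z$; (3) $y$ is the $\le$-least element of $[y]_\alpha$; moreover $y\sqsubseteq_{\alpha+1}w$ for all $w\in[y]_\alpha$, and $y\sqsubseteq_{\alpha+1}f(y)$.
   Context: Setting (model of Axioms 1–4). Let $(L,\le)$ be a complete lattice with join operation $\bigvee$ and least element $\perp$. Let $\kappa>0$ be an ordinal, and for each ordinal $\alpha<\kappa$ let $\sqsubseteq_\alpha$ be a preorder on $L$. Derived relations: - $x=_\alpha y$ means $x\sqsubseteq_\alpha y$ and $y\sqsubseteq_\alpha x$. - $x\sqsubset_\alpha y$ means $x\sqsubseteq_\alpha y$ and not $x=_\alpha y$. Derived sets, for $x\in L$ and $\alpha<\kappa$: - $(x]_\alpha=\{y\in L:\forall\beta<\alpha,\ x=_\beta y\}$. - $[x]_\alpha=\{y\in L: x=_\alpha y\}$. For a set $X$, $X\sqsubseteq_\alpha y$ means $x\sqsubseteq_\alpha y$ for all $x\in X$. The structure is a model of Axioms 1–4 if: - (A1) for all $\alpha<\beta<\kappa$, $x\sqsubseteq_\beta y$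 implies $x=_\alpha y$; - (A2) $\bigcap_{\alpha<\kappa}=_\alpha$ is the identity relation on $L$; - (A3) for every $x\in L$, every $\alpha<\kappa$ and every $X\subseteq(x]_\alpha$ there is $y\in(x]_\alpha$ with $X\sqsubseteq_\alpha y$ such that for all $z\in(x]_\alpha$ with $X\sqsubseteq_\alpha z$ we have $y\sqsubseteq_\alpha z$ and $y\le z$; - (A4) for every nonempty $X\subseteq L$, every $\alpha<\kappa$ and every $y\in L$, if $y=_\alpha x$ for all $x\in X$ then $y=_\alpha\bigvee X$. A function $f:L\to L$ is $\alpha$-monotonic if $x\sqsubseteq_\alpha y$ implies $f(x)\sqsubseteq_\alpha f(y)$. *)

theory Defs
  imports Main
begin

text \<open>Ordinals below kappa are represented by the elements of a well-ordered
index type 'i (so kappa is the order type of 'i; kappa > 0 is automatic since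
types are nonempty). The family of preorders is R :: 'i => 'a => 'a => bool,
where R a x y means x is below y in the a-th preorder.\<close>

definition eq_at :: "('i \<Rightarrow> 'a \<Rightarrow> 'a \<Rightarrow> bool) \<Rightarrow> 'i \<Rightarrow> 'a \<Rightarrow> 'a \<Rightarrow> bool" where
  "eq_at R a x y \<longleftrightarrow> R a x y \<and> R a y x"

definition lt_at :: "('i \<Rightarrow> 'a \<Rightarrow> 'a \<Rightarrow> bool) \<Rightarrow> 'i \<Rightarrow> 'a \<Rightarrow> 'a \<Rightarrow> bool" where
  "lt_at R a x y \<longleftrightarrow> R a x y \<and> \<not> eq_at R a x y"

definition down_cls :: "('i::wellorder \<Rightarrow> 'a \<Rightarrow> 'a \<Rightarrow> bool) \<Rightarrow> 'i \<Rightarrow> 'a \<Rightarrow> 'a set" where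
  "down_cls R a x = {y. \<forall>b<a. eq_at R b x y}"

definition eq_cls :: "('i \<Rightarrow> 'a \<Rightarrow> 'a \<Rightarrow> bool) \<Rightarrow> 'i \<Rightarrow> 'a \<Rightarrow> 'a set" where
  "eq_cls R a x = {y. eq_at R a x y}"

definition is_model :: "('i::wellorder \<Rightarrow> 'a::complete_lattice \<Rightarrow> 'a \<Rightarrow> bool) \<Rightarrow> bool" where
  "is_model R \<longleftrightarrow>
     (\<forall>a. (\<forall>x. R a x x) \<and> (\<forall>x y z. R a x y \<longrightarrow> R a y z \<longrightarrow> R a x z)) \<and>
     (\<forall>a b x y. a < b \<longrightarrow> R b x y \<longrightarrow> eq_at R a x y) \<and>
     (\<forall>x y. (\<forall>a. eq_at R a x y) \<longleftrightarrow> x = y) \<and>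
     (\<forall>x a X. X \<subseteq> down_cls R a x \<longrightarrow>
        (\<exists>y\<in>down_cls R a x. (\<forall>u\<in>X. R a u y) \<and>
           (\<forall>z\<in>down_cls R a x. (\<forall>u\<in>X. R a u z) \<longrightarrow> R a y z \<and> y \<le> z))) \<and>
     (\<forall>X a y. X \<noteq> {} \<longrightarrow> (\<forall>x\<in>X. eq_at R a y x) \<longrightarrow> eq_at R a y (Sup X))"

definition is_limit_type :: "'i::wellorder itself \<Rightarrow> bool" where
  "is_limit_type _ \<longleftrightarrow> (\<forall>a::'i. \<exists>b. a < b)"

text \<open>Successor ordinal a+1 (exists below kappa when kappa is a limit).\<close>
definition osucc :: "'i::wellorder \<Rightarrow> 'i" where
  "osucc a = (LEAST b. a < b)"

definition mono_at :: "('i \<Rightarrow> 'a \<Rightarrow> 'a \<Rightarrow> bool) \<Rightarrow> 'i \<Rightarrow> ('a \<Rightarrow> 'a) \<Rightarrow> bool" where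
  "mono_at R a f \<longleftrightarrow> (\<forall>x y. R a x y \<longrightarrow> R a (f x) (f y))"

end

theory Submission
  imports Defs
begin

(* Fix alpha and an alpha-monotonic f with x below f x.
   (i) A Knaster-Tarski argument inside the cone (x]_alpha: by Axiom 3 the set of
   elements that lie below every prefixed point above x has a least upper bound
   y0 in (x]_alpha; y0 is then the least prefixed point above x and a fixed point
   of f up to =_alpha.
   (ii) Since kappa is a limit, alpha+1 < kappa and (u]_(alpha+1) = [u]_alpha.
   Applying Axiom 3 to the empty subset of (y0]_(alpha+1) yields an element y of
   [y0]_alpha that is both <=-least and (alpha+1)-least in that class.
   (iii) All properties of y0 in (i) are invariant under =_alpha, so y inherits
   them, and y has the required canonicity by (ii).
   The file first extracts the axioms from is_model, then proves (i), (ii) as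
   separate lemmas, and derives mainTheorem3 from them. *)

lemma model_refl: "is_model R \<Longrightarrow> R a u u"
  unfolding is_model_def by (elim conjE) blast

lemma model_trans: "is_model R \<Longrightarrow> R a u v \<Longrightarrow> R a v w \<Longrightarrow> R a u w"
  unfolding is_model_def by (elim conjE) blast

lemma model_A1: "is_model R \<Longrightarrow> b < c \<Longrightarrow> R c u v \<Longrightarrow> eq_at R b u v"
  unfolding is_model_def by (elim conjE) blast

lemma model_A3:
  assumes "is_model R" and "X \<subseteq> down_cls R c u"
  obtains y where "y \<in> down_cls R c u" and "\<And>v. v \<in> X \<Longrightarrow> R c v y"
    and "\<And>z. z \<in> down_cls R c u \<Longrightarrow> (\<And>v. v \<in> X \<Longrightarrow> R c v z) \<Longrightarrow> R c y z \<and> y \<le> z"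
proof -
  have "\<forall>u c X. X \<subseteq> down_cls R c u \<longrightarrow>
        (\<exists>y\<in>down_cls R c u. (\<forall>v\<in>X. R c v y) \<and>
           (\<forall>z\<in>down_cls R c u. (\<forall>v\<in>X. R c v z) \<longrightarrow> R c y z \<and> y \<le> z))"
    using assms(1) unfolding is_model_def by (elim conjE) assumption
  then obtain y where "y \<in> down_cls R c u" "\<forall>v\<in>X. R c v y"
     "\<forall>z\<in>down_cls R c u. (\<forall>v\<in>X. R c v z) \<longrightarrow> R c y z \<and> y \<le> z"
    using assms(2) by blast
  then show thesis by (intro that) auto
qed

lemma above_in_down_cls: "is_model R \<Longrightarrow> R c u v \<Longrightarrow> v \<in> down_cls R c u"
  unfolding down_cls_def using model_A1 by blast

lemma eq_at_trans: "is_model R \<Longrightarrow> eq_at R a u v \<Longrightarrow> eq_at R a v w \<Longrightarrow> eq_at R a u w"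
  unfolding eq_at_def by (blast intro: model_trans)

lemma eq_at_sym: "eq_at R a u v \<Longrightarrow> eq_at R a v u"
  unfolding eq_at_def by blast

lemma eq_cls_cong: "is_model R \<Longrightarrow> eq_at R a u v \<Longrightarrow> eq_cls R a u = eq_cls R a v"
  unfolding eq_cls_def by (blast intro: eq_at_trans eq_at_sym)

lemma mono_at_eq: "mono_at R a f \<Longrightarrow> eq_at R a u v \<Longrightarrow> eq_at R a (f u) (f v)"
  unfolding mono_at_def eq_at_def by blast

lemma least_prefixed_point:
  assumes model: "is_model R" and mono: "mono_at R a f" and x_fx: "R a x (f x)"
  obtains y where "R a x y" and "eq_at R a y (f y)"
    and "\<And>z. R a x z \<Longrightarrow> R a (f z) z \<Longrightarrow> R a y z"
proof -
  have f_mono: "R a (f u) (f v)" if "R a u v" for u v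
    using mono that unfolding mono_at_def by blast
  define P where "P = {z. R a x z \<and> R a (f z) z}"
  define X where "X = {u \<in> down_cls R a x. \<forall>z\<in>P. R a u z}"
  obtain y where "y \<in> down_cls R a x" and y_ub: "\<And>v. v \<in> X \<Longrightarrow> R a v y"
    and y_least: "\<And>z. z \<in> down_cls R a x \<Longrightarrow> (\<And>v. v \<in> X \<Longrightarrow> R a v z) \<Longrightarrow> R a y z \<and> y \<le> z"
    using model_A3[OF model, of X a x] unfolding X_def by blast
  have y_below_P: "R a y z" if "z \<in> P" for z
  proof -
    have "z \<in> down_cls R a x" using that above_in_down_cls[OF model] unfolding P_def by blast
    moreover have "R a v z" if "v \<in> X" for v using that \<open>z \<in> P\<close> unfolding X_def by blast
    ultimately show ?thesis using y_least by blast
  qed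
  have "x \<in> X" unfolding X_def P_def
    using above_in_down_cls[OF model] model_refl[OF model] by blast
  then have x_y: "R a x y" by (rule y_ub)
  have x_fy: "R a x (f y)" using model_trans[OF model x_fx f_mono[OF x_y]] .
  have "R a (f y) z" if "z \<in> P" for z
  proof -
    have "R a (f y) (f z)" using f_mono[OF y_below_P[OF that]] .
    moreover have "R a (f z) z" using that unfolding P_def by blast
    ultimately show ?thesis by (rule model_trans[OF model])
  qed
  then have "f y \<in> X" unfolding X_def using above_in_down_cls[OF model x_fy] by blast
  then have fy_y: "R a (f y) y" by (rule y_ub)
  then have "f y \<in> P" unfolding P_def using x_fy f_mono by blast
  then have "R a y (f y)" by (rule y_below_P)
  with fy_y have "eq_at R a y (f y)" unfolding eq_at_def by blast
  with x_y show ?thesis using that y_below_P unfolding P_def by blast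
qed

lemma osucc_greater:
  assumes "is_limit_type TYPE('i)"
  shows "(a::'i::wellorder) < osucc a"
proof -
  obtain b where "a < b" using assms unfolding is_limit_type_def by blast
  then show ?thesis unfolding osucc_def by (rule LeastI)
qed

lemma less_osucc_le: "c < osucc a \<Longrightarrow> c \<le> a"
  unfolding osucc_def using not_less_Least by (rule leI)

lemma down_cls_osucc:
  assumes model: "is_model R" and lim: "is_limit_type TYPE('i)"
  shows "down_cls R (osucc (a::'i::wellorder)) u = eq_cls R a u"
proof
  show "down_cls R (osucc a) u \<subseteq> eq_cls R a u"
    unfolding down_cls_def eq_cls_def using osucc_greater[OF lim] by blast
  show "eq_cls R a u \<subseteq> down_cls R (osucc a) u"
  proof
    fix w assume "w \<in> eq_cls R a u"
    then have w: "eq_at R a u w" unfolding eq_cls_def by blast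
    have "eq_at R c u w" if "c < osucc a" for c
    proof (cases "c = a")
      case False
      then have "c < a" using less_osucc_le[OF that] by simp
      then show ?thesis using w model_A1[OF model] unfolding eq_at_def by blast
    qed (use w in simp)
    then show "w \<in> down_cls R (osucc a) u" unfolding down_cls_def by blast
  qed
qed

text \<open>Every class at level a contains an element that is least in it both for the
  lattice order and for the preorder at level a+1 (Axiom 3 with the empty set).\<close>
lemma canonical_representative:
  assumes model: "is_model R" and lim: "is_limit_type TYPE('i)"
  obtains y where "y \<in> eq_cls R (a::'i::wellorder) u"
    and "\<And>w. w \<in> eq_cls R a u \<Longrightarrow> R (osucc a) y w \<and> y \<le> w"
proof -
  have "\<exists>y\<in>down_cls R (osucc a) u. \<forall>z\<in>down_cls R (osucc a) u. R (osucc a) y z \<and> y \<le> z"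
    by (rule model_A3[OF model empty_subsetI]) auto
  then show thesis using that unfolding down_cls_osucc[OF model lim] by blast
qed

theorem mainTheorem3:
  fixes R :: "'i::wellorder \<Rightarrow> 'a::complete_lattice \<Rightarrow> 'a \<Rightarrow> bool"
    and a :: 'i and f :: "'a \<Rightarrow> 'a" and x :: 'a
  assumes "is_model R"
    and "is_limit_type TYPE('i)"
    and "mono_at R a f"
    and "R a x (f x)"
  shows "\<exists>y. (R a x y \<and> eq_at R a y (f y)) \<and>
             (\<forall>z. R a x z \<and> R a (f z) z \<longrightarrow> R a y z) \<and>
             (y \<in> eq_cls R a y \<and> (\<forall>w\<in>eq_cls R a y. y \<le> w)) \<and>
             (\<forall>w\<in>eq_cls R a y. R (osucc a) y w) \<and> R (osucc a) y (f y)"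
proof -
  note model = assms(1)
  obtain y0 where x_y0: "R a x y0" and fix_y0: "eq_at R a y0 (f y0)"
    and least_y0: "\<And>z. R a x z \<Longrightarrow> R a (f z) z \<Longrightarrow> R a y0 z"
    by (rule least_prefixed_point[OF model assms(3,4)]) iprover
  obtain y where y_cls0: "y \<in> eq_cls R a y0"
    and canon: "\<And>w. w \<in> eq_cls R a y0 \<Longrightarrow> R (osucc a) y w \<and> y \<le> w"
    by (rule canonical_representative[OF model assms(2)]) iprover
  have y_y0: "eq_at R a y y0" using y_cls0 eq_at_sym[of R a y0 y] unfolding eq_cls_def by simp
  have cls: "eq_cls R a y = eq_cls R a y0" using eq_cls_cong[OF model y_y0] .
  have fix_y: "eq_at R a y (f y)"
    using eq_at_trans[OF model eq_at_trans[OF model y_y0 fix_y0]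
        mono_at_eq[OF assms(3) eq_at_sym[OF y_y0]]] .
  have x_y: "R a x y" using model_trans[OF model x_y0] y_y0 unfolding eq_at_def by blast
  have least_y: "R a y z" if "R a x z" "R a (f z) z" for z
    using model_trans[OF model _ least_y0[OF that]] y_y0 unfolding eq_at_def by blast
  have y_cls: "y \<in> eq_cls R a y" and fy_cls: "f y \<in> eq_cls R a y"
    using fix_y model_refl[OF model] unfolding eq_cls_def eq_at_def by auto
  show ?thesis
  proof (intro exI[of _ y] conjI allI impI ballI)
    show "R a x y" "eq_at R a y (f y)" "y \<in> eq_cls R a y" by (fact x_y fix_y y_cls)+
    show "R (osucc a) y (f y)" using canon fy_cls unfolding cls by blast
    fix w assume "w \<in> eq_cls R a y"
    then show "y \<le> w" "R (osucc a) y w" using canon unfolding cls by blast+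
  qed (use least_y in blast)
qed

end
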